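(* (a) If $\pi\in\mathfrak{S}_{2n+1}$ is a down-up permutation, then every inversion of $\pi$ is admissible, i.e. $\mathsf{adi}\,\pi=\mathsf{inv}\,\pi$. (b) For every $n\ge0$ and every $\pi\in\widetilde{\mathfrak{S}}_{2n+1,n}(213)$, $$\mathsf{adi}\,\pi+\mathsf{adi}\,\pi^r=2n^2+n,\qquad \mathsf{adi}\,\pi=2\cdot(3\text{-}12)\pi,\qquad \mathsf{adi}\,\pi^r=(31\text{-}2)\pi.$$
   Context: A permutation $\pi\in\mathfrak{S}_m$ is down-up if $\pi(1)>\pi(2)<\pi(3)>\pi(4)<\cdots$ (descents and ascents alternate, starting with a descent). $\pi^r=\pi(m)\cdots\pi(1)$ is the reverse. $\mathsf{inv}\,\pi=\#\{i<j:\pi(i)>\pi(j)\}$. Admissible inversions: set $\pi(m+1)=0$; an inversion pair $(\pi(i),\pi(j))$ ($1\le i<j\le m$, $\pi(i)>\pi(j)$) is admissible if $\pi(j)<\pi(j+1)$ or there is $l$ with $i<l<j$ and $\pi(l)<\pi(j)$; $\mathsf{adi}\,\pi$ counts them. $(3\text{-}12)\pi=\#\{(i,j):i<j<m,\ \pi(j)<\pi(j+1)<\pi(i)\}$; $(31\text{-}2)\pi=\#\{(i,j):i+1<j\le m,\ \pi(i+1)<\pi(j)<\pi(i)\}$. $\mathsf{des}\,\pi=\#\{i\in[m-1]:\pi(i)>\pi(i+1)\}$; $\mathsf{dd}\,\pi$ is the number of $i\in[m]$ with $\pi(i-1)>\pi(i)>\pi(i+1)$ under the boundary convention $\pi(0)=\pi(m+1)=0$.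 $\widetilde{\mathfrak{S}}_{m,k}(213)=\{\pi\in\mathfrak{S}_m:\pi\text{ avoids }213,\ \mathsf{dd}\,\pi=0,\ \mathsf{des}\,\pi=k\}$. *)

theory Defs
  imports Main
begin

text \<open>A permutation pi of [m] is represented as a list xs of length m with
  pi(i) = xs ! (i - 1) for 1 <= i <= m.  The value function pv extends pi by
  pi(0) = pi(m+1) = 0 (the boundary conventions of the paper).\<close>

definition is_perm :: "nat \<Rightarrow> nat list \<Rightarrow> bool" where
  "is_perm m xs \<longleftrightarrow> length xs = m \<and> distinct xs \<and> set xs = {1..m}"

definition pv :: "nat list \<Rightarrow> nat \<Rightarrow> nat" where
  "pv xs i = (if 1 \<le> i \<and> i \<le> length xs then xs ! (i - 1) else 0)"

definition down_up :: "nat list \<Rightarrow> bool" where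
  "down_up xs \<longleftrightarrow> (\<forall>i. 1 \<le> i \<and> i < length xs \<longrightarrow>
     (odd i \<longrightarrow> pv xs i > pv xs (i + 1)) \<and> (even i \<longrightarrow> pv xs i < pv xs (i + 1)))"

definition inv_stat :: "nat list \<Rightarrow> nat" where
  "inv_stat xs = card {(i, j). 1 \<le> i \<and> i < j \<and> j \<le> length xs \<and> pv xs i > pv xs j}"

definition adi :: "nat list \<Rightarrow> nat" where
  "adi xs = card {(i, j). 1 \<le> i \<and> i < j \<and> j \<le> length xs \<and> pv xs i > pv xs j \<and>
      (pv xs j < pv xs (j + 1) \<or> (\<exists>l. i < l \<and> l < j \<and> pv xs l < pv xs j))}"

definition pat_3_12 :: "nat list \<Rightarrow> nat" where
  "pat_3_12 xs = card {(i, j). 1 \<le> i \<and> i < j \<and> j < length xs \<and>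
      pv xs j < pv xs (j + 1) \<and> pv xs (j + 1) < pv xs i}"

definition pat_31_2 :: "nat list \<Rightarrow> nat" where
  "pat_31_2 xs = card {(i, j). 1 \<le> i \<and> i + 1 < j \<and> j \<le> length xs \<and>
      pv xs (i + 1) < pv xs j \<and> pv xs j < pv xs i}"

definition des :: "nat list \<Rightarrow> nat" where
  "des xs = card {i. 1 \<le> i \<and> i < length xs \<and> pv xs i > pv xs (i + 1)}"

definition dd :: "nat list \<Rightarrow> nat" where
  "dd xs = card {i. 1 \<le> i \<and> i \<le> length xs \<and>
      pv xs (i - 1) > pv xs i \<and> pv xs i > pv xs (i + 1)}"

definition avoids_213 :: "nat list \<Rightarrow> bool" where
  "avoids_213 xs \<longleftrightarrow> \<not> (\<exists>i j k. 1 \<le> i \<and> i < j \<and> j < k \<and> k \<le> length xs \<and>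
      pv xs j < pv xs i \<and> pv xs i < pv xs k)"

definition S_tilde_213 :: "nat \<Rightarrow> nat \<Rightarrow> nat list set" where
  "S_tilde_213 m k = {xs. is_perm m xs \<and> avoids_213 xs \<and> dd xs = 0 \<and> des xs = k}"

end

theory Submission
  imports Defs
begin

text \<open>A down-up word of odd length ascends exactly at its even positions. So an inversion
  (i, j) is admissible: either j is even and an ascent starts at j, or j is odd and the ascent
  ending at j starts strictly after i.

  For part (b), the conditions dd = 0 and des = n force the descents of a permutation of [2n+1]
  to be the odd positions, i.e. the permutation is down-up. Reversing turns the admissible
  inversions of the reverse into the non-inversions (a, b) that are preceded by a descent or by a
  smaller entry between a and b. Avoidance of 213 makes every non-inversion start at an even
  position, hence all of them qualify, and adi + adi of the reverse counts all pairs. Avoidance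
  of 213 also identifies the inversions (i, j) with even j with the occurrences of 3-12, those
  with odd j with the same occurrences shifted by one, and the non-inversions with the
  occurrences of 31-2 shifted by one.\<close>

lemma pv_rev: "pv (rev xs) i = pv xs (Suc (length xs) - i)"
  unfolding pv_def by (auto simp: rev_nth Suc_diff_le)

lemma pv_eq_iff:
  assumes "distinct xs" "1 \<le> i" "i \<le> length xs" "1 \<le> j" "j \<le> length xs"
  shows "pv xs i = pv xs j \<longleftrightarrow> i = j"
  using assms unfolding pv_def by (auto simp: nth_eq_iff_index_eq)

lemma pv_pos:
  assumes "0 \<notin> set xs" "1 \<le> i" "i \<le> length xs"
  shows "0 < pv xs i"
proof -
  from assms have "xs ! (i - 1) \<in> set xs" by (intro nth_mem) simp
  with assms(1) have "xs ! (i - 1) \<noteq> 0" by metis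
  with assms show ?thesis by (simp add: pv_def)
qed

lemma down_up_descent_iff:
  "down_up xs \<Longrightarrow> 1 \<le> i \<Longrightarrow> i < length xs \<Longrightarrow> pv xs (i + 1) < pv xs i \<longleftrightarrow> odd i"
  unfolding down_up_def by auto

lemma down_up_ascent_iff:
  "down_up xs \<Longrightarrow> 1 \<le> i \<Longrightarrow> i < length xs \<Longrightarrow> pv xs i < pv xs (i + 1) \<longleftrightarrow> even i"
  unfolding down_up_def by auto

lemma avoids_213_less:
  assumes avoids: "avoids_213 xs" and "distinct xs"
    and ijk: "1 \<le> i" "i < j" "j < k" "k \<le> length xs" "pv xs j < pv xs i"
  shows "pv xs k < pv xs i"
proof (rule ccontr)
  assume "\<not> pv xs k < pv xs i"
  moreover have "pv xs k \<noteq> pv xs i" using pv_eq_iff[OF \<open>distinct xs\<close>, of k i] ijk by simp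
  ultimately have "pv xs i < pv xs k" by simp
  with ijk have "\<exists>i j k. 1 \<le> i \<and> i < j \<and> j < k \<and> k \<le> length xs \<and>
      pv xs j < pv xs i \<and> pv xs i < pv xs k"
    by blast
  with avoids show False unfolding avoids_213_def by (rule notE)
qed

lemma dd_eq_0_iff:
  "dd xs = 0 \<longleftrightarrow>
     (\<forall>i. 1 \<le> i \<and> i \<le> length xs \<longrightarrow> \<not> (pv xs (i - 1) > pv xs i \<and> pv xs i > pv xs (i + 1)))"
proof -
  have "finite {i. 1 \<le> i \<and> i \<le> length xs \<and> pv xs (i - 1) > pv xs i \<and> pv xs i > pv xs (i + 1)}"
    by (rule finite_subset[of _ "{..length xs}"]) auto
  then show ?thesis unfolding dd_def by auto
qed

lemma card_index_pairs: "card {(i, j). 1 \<le> i \<and> i < j \<and> j \<le> (m::nat)} = m choose 2"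
proof (induction m)
  case 0
  have "{(i, j). 1 \<le> i \<and> i < j \<and> j \<le> (0::nat)} = {}" by auto
  then show ?case by (simp only:) simp
next
  case (Suc m)
  have split: "{(i, j). 1 \<le> i \<and> i < j \<and> j \<le> Suc m} =
      {(i, j). 1 \<le> i \<and> i < j \<and> j \<le> m} \<union> (\<lambda>i. (i, Suc m)) ` {1..m}"
    by auto
  have "finite {(i, j). 1 \<le> i \<and> i < j \<and> j \<le> m}"
    by (rule finite_subset[of _ "{..m} \<times> {..m}"]) auto
  moreover have "card ((\<lambda>i. (i, Suc m)) ` {1..m}) = m"
    by (simp add: card_image inj_on_def)
  ultimately have "card {(i, j). 1 \<le> i \<and> i < j \<and> j \<le> Suc m} = (m choose 2) + m"
    unfolding split Suc.IH[symmetric] by (subst card_Un_disjoint) auto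
  also have "\<dots> = Suc m choose 2"
    by (simp add: numeral_2_eq_2)
  finally show ?case .
qed

lemma no_consecutive_eq_odd:
  assumes sub: "D \<subseteq> {1..<2 * k}" and no_succ: "\<forall>i\<in>D. Suc i \<notin> D" and card: "card D = k"
  shows "D = {i. odd i \<and> i < 2 * k}"
proof -
  txt \<open>Each block {2t, 2t+1} meets D at most once, so i \<mapsto> i div 2 maps D onto the k
    blocks; the element of block t is then 2t+1, by induction on t.\<close>
  have "inj_on (\<lambda>i. i div 2) D"
  proof (rule inj_onI)
    fix i j assume "i \<in> D" "j \<in> D" "i div 2 = j div 2"
    moreover from \<open>i div 2 = j div 2\<close> have "i = j \<or> Suc i = j \<or> Suc j = i"
      by presburger
    ultimately show "i = j" using no_succ by auto
  qed
  moreover have "(\<lambda>i. i div 2) ` D \<subseteq> {..<k}"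
    using sub by (auto simp: less_mult_imp_div_less)
  ultimately have "(\<lambda>i. i div 2) ` D = {..<k}"
    using card by (intro card_subset_eq) (auto simp: card_image)
  then have block_hit: "\<exists>i\<in>D. i div 2 = t" if "t < k" for t
    using that by (simp add: set_eq_iff image_iff) metis
  have odd_mem: "2 * t + 1 \<in> D" if "t < k" for t
    using that
  proof (induction t)
    case 0
    then obtain i where "i \<in> D" "i div 2 = 0" using block_hit by blast
    moreover from \<open>i div 2 = 0\<close> have "i < 2" by presburger
    moreover from \<open>i \<in> D\<close> sub have "1 \<le> i" by auto
    ultimately have "i = 2 * 0 + 1" by simp
    with \<open>i \<in> D\<close> show ?case by simp
  next
    case (Suc t)
    then obtain i where "i \<in> D" "i div 2 = Suc t" using block_hit by blast
    moreover from \<open>i div 2 = Suc t\<close> have "i = Suc (2 * t + 1) \<or> i = 2 * Suc t + 1"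
      by presburger
    moreover have "Suc (2 * t + 1) \<notin> D" using Suc no_succ by simp
    ultimately show ?case by auto
  qed
  show ?thesis
  proof (intro set_eqI iffI)
    fix i assume "i \<in> D"
    with sub have i: "1 \<le> i" "i < 2 * k" by auto
    have "odd i"
    proof
      assume "even i"
      then obtain t where "i = 2 * t" by (rule evenE)
      with i have "i - 1 = 2 * (t - 1) + 1" "t - 1 < k" by simp_all
      then have "i - 1 \<in> D" using odd_mem[of "t - 1"] by simp
      with no_succ have "Suc (i - 1) \<notin> D" by blast
      with i \<open>i \<in> D\<close> show False by simp
    qed
    with i show "i \<in> {i. odd i \<and> i < 2 * k}" by simp
  next
    fix i assume "i \<in> {i. odd i \<and> i < 2 * k}"
    then obtain t where "i = 2 * t + 1" "t < k" by (auto elim!: oddE)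
    then show "i \<in> D" using odd_mem by simp
  qed
qed

lemma down_up_inversion_odd:
  assumes du: "down_up xs" and ij: "1 \<le> i" "i < j" "j \<le> length xs" "pv xs j < pv xs i"
    and "odd j"
  shows "i < j - 1 \<and> pv xs (j - 1) < pv xs j"
proof -
  from \<open>odd j\<close> ij have prev: "1 \<le> j - 1" "j - 1 < length xs" "even (j - 1)" "j - 1 + 1 = j"
    by (auto elim!: oddE)
  then have ascent: "pv xs (j - 1) < pv xs j"
    using down_up_ascent_iff[OF du, of "j - 1"] by simp
  have "i \<noteq> j - 1"
    using ascent ij(4) by auto
  with ij ascent show ?thesis by simp
qed

lemma down_up_inversion_admissible:
  assumes du: "down_up xs" and odd_len: "odd (length xs)"
    and ij: "1 \<le> i" "i < j" "j \<le> length xs" "pv xs j < pv xs i"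
  shows "pv xs j < pv xs (j + 1) \<or> (\<exists>l. i < l \<and> l < j \<and> pv xs l < pv xs j)"
proof (cases "even j")
  case True
  with odd_len have "j \<noteq> length xs" by auto
  with ij have "j < length xs" by simp
  then show ?thesis using down_up_ascent_iff[OF du, of j] True ij by simp
next
  case False
  with down_up_inversion_odd[OF du ij] have "i < j - 1" "pv xs (j - 1) < pv xs j"
    by simp_all
  then show ?thesis by (intro disjI2 exI[of _ "j - 1"]) simp
qed

lemma adi_eq_inv_stat_if_down_up:
  assumes "down_up xs" "odd (length xs)"
  shows "adi xs = inv_stat xs"
  unfolding adi_def inv_stat_def
  using down_up_inversion_admissible[OF assms] by (intro arg_cong[where f = card]) auto

text \<open>For a = 1 the first disjunct fails, matching the convention pv (rev xs) (m + 1) = 0.\<close>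

lemma adi_rev:
  "adi (rev xs) = card {(a, b). 1 \<le> a \<and> a < b \<and> b \<le> length xs \<and> pv xs a < pv xs b \<and>
      (pv xs a < pv xs (a - 1) \<or> (\<exists>l. a < l \<and> l < b \<and> pv xs l < pv xs a))}"
    (is "_ = card ?A")
proof -
  define m where "m = length xs"
  define flip where "flip = (\<lambda>(i, j). (Suc m - j, Suc m - i))"
  let ?R = "{(i, j). 1 \<le> i \<and> i < j \<and> j \<le> length (rev xs) \<and> pv (rev xs) i > pv (rev xs) j \<and>
      (pv (rev xs) j < pv (rev xs) (j + 1) \<or> (\<exists>l. i < l \<and> l < j \<and> pv (rev xs) l < pv (rev xs) j))}"
  have "bij_betw flip ?A ?R"
  proof (rule bij_betw_byWitness[where f' = flip])
    show "\<forall>p\<in>?A. flip (flip p) = p" "\<forall>p\<in>?R. flip (flip p) = p"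
      by (auto simp: flip_def m_def)
    show "flip ` ?A \<subseteq> ?R"
      apply (auto simp: flip_def m_def pv_rev)
      subgoal for a b l by (drule spec[of _ "Suc (length xs) - l"]) auto
      done
    show "flip ` ?R \<subseteq> ?A"
      by (auto simp: flip_def m_def pv_rev)
  qed
  then show ?thesis
    unfolding adi_def by (simp add: bij_betw_same_card)
qed

lemma down_up_if_S_tilde_213:
  assumes "xs \<in> S_tilde_213 (2 * n + 1) n"
  shows "down_up xs"
proof -
  from assms have "is_perm (2 * n + 1) xs" and "dd xs = 0" and des: "des xs = n"
    by (auto simp: S_tilde_213_def)
  then have len: "length xs = 2 * n + 1" and "distinct xs" and "0 \<notin> set xs"
    by (auto simp: is_perm_def)
  have no_dd: "\<not> (pv xs (i - 1) > pv xs i \<and> pv xs i > pv xs (i + 1))"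
    if "1 \<le> i" "i \<le> length xs" for i
    using \<open>dd xs = 0\<close> that by (simp add: dd_eq_0_iff)
  define D where "D = {i. 1 \<le> i \<and> i < length xs \<and> pv xs i > pv xs (i + 1)}"
  have "2 * n \<notin> D"
  proof
    assume "2 * n \<in> D"
    moreover have "pv xs (2 * n + 2) < pv xs (2 * n + 1)"
      using pv_pos[OF \<open>0 \<notin> set xs\<close>, of "2 * n + 1"] len by (simp add: pv_def)
    ultimately show False using no_dd[of "2 * n + 1"] len by (simp add: D_def)
  qed
  then have "D \<subseteq> {1..<2 * n}" using len by (auto simp: D_def less_Suc_eq)
  moreover have "\<forall>i\<in>D. Suc i \<notin> D" using no_dd by (auto simp: D_def)
  moreover have "card D = n" using des by (simp add: des_def D_def)
  ultimately have descents: "D = {i. odd i \<and> i < 2 * n}" by (rule no_consecutive_eq_odd)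
  show ?thesis
    unfolding down_up_def
  proof (intro allI impI conjI)
    fix i assume i: "1 \<le> i \<and> i < length xs"
    have "pv xs i > pv xs (i + 1) \<longleftrightarrow> i \<in> D"
      using i by (simp add: D_def)
    also have "\<dots> \<longleftrightarrow> odd i"
      using descents i len by (cases "i = 2 * n") auto
    finally have descent_iff: "pv xs i > pv xs (i + 1) \<longleftrightarrow> odd i" .
    then show "pv xs i > pv xs (i + 1)" if "odd i"
      using that by simp
    have "pv xs i \<noteq> pv xs (i + 1)"
      using pv_eq_iff[OF \<open>distinct xs\<close>, of i "i + 1"] i by simp
    with descent_iff show "pv xs i < pv xs (i + 1)" if "even i"
      using that by auto
  qed
qed

definition inversions :: "nat list \<Rightarrow> (nat \<times> nat) set" where
  "inversions xs = {(i, j). 1 \<le> i \<and> i < j \<and> j \<le> length xs \<and> pv xs i > pv xs j}"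

definition noninversions :: "nat list \<Rightarrow> (nat \<times> nat) set" where
  "noninversions xs = {(i, j). 1 \<le> i \<and> i < j \<and> j \<le> length xs \<and> pv xs i < pv xs j}"

definition occ_3_12 :: "nat list \<Rightarrow> (nat \<times> nat) set" where
  "occ_3_12 xs = {(i, j). 1 \<le> i \<and> i < j \<and> j < length xs \<and>
      pv xs j < pv xs (j + 1) \<and> pv xs (j + 1) < pv xs i}"

definition occ_31_2 :: "nat list \<Rightarrow> (nat \<times> nat) set" where
  "occ_31_2 xs = {(i, j). 1 \<le> i \<and> i + 1 < j \<and> j \<le> length xs \<and>
      pv xs (i + 1) < pv xs j \<and> pv xs j < pv xs i}"

lemma finite_inversions: "finite (inversions xs)"
  by (rule finite_subset[of _ "{..length xs} \<times> {..length xs}"]) (auto simp: inversions_def)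

lemma finite_noninversions: "finite (noninversions xs)"
  by (rule finite_subset[of _ "{..length xs} \<times> {..length xs}"]) (auto simp: noninversions_def)

lemma card_inversions_add_noninversions:
  assumes "distinct xs"
  shows "card (inversions xs) + card (noninversions xs) = length xs choose 2"
proof -
  have "pv xs i \<noteq> pv xs j" if "1 \<le> i" "i < j" "j \<le> length xs" for i j
    using pv_eq_iff[OF assms, of i j] that by simp
  then have partition:
      "inversions xs \<union> noninversions xs = {(i, j). 1 \<le> i \<and> i < j \<and> j \<le> length xs}"
    by (fastforce simp: inversions_def noninversions_def linorder_neq_iff)
  have "inversions xs \<inter> noninversions xs = {}"
    by (auto simp: inversions_def noninversions_def)
  then have "card (inversions xs) + card (noninversions xs) =
      card (inversions xs \<union> noninversions xs)"
    by (simp add: card_Un_disjoint finite_inversions finite_noninversions)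
  also have "\<dots> = length xs choose 2"
    unfolding partition by (rule card_index_pairs)
  finally show ?thesis .
qed

context
  fixes xs :: "nat list"
  assumes down_up: "down_up xs" and odd_len: "odd (length xs)"
    and distinct: "distinct xs" and avoids: "avoids_213 xs"
begin

lemma inversions_even_eq: "{p \<in> inversions xs. even (snd p)} = occ_3_12 xs"
proof (intro set_eqI iffI)
  fix p assume "p \<in> {p \<in> inversions xs. even (snd p)}"
  then obtain i j where p: "p = (i, j)" and ij: "1 \<le> i" "i < j" "j \<le> length xs"
    "pv xs j < pv xs i" and "even j"
    by (auto simp: inversions_def)
  with odd_len have "j \<noteq> length xs" by auto
  with ij have "j < length xs" by simp
  then have "pv xs j < pv xs (j + 1)"
    using down_up_ascent_iff[OF down_up, of j] \<open>even j\<close> ij by simp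
  moreover have "pv xs (j + 1) < pv xs i"
    using avoids_213_less[OF avoids distinct, of i j "j + 1"] ij \<open>j < length xs\<close> by simp
  ultimately show "p \<in> occ_3_12 xs"
    using p ij \<open>j < length xs\<close> by (simp add: occ_3_12_def)
next
  fix p assume "p \<in> occ_3_12 xs"
  then obtain i j where p: "p = (i, j)" and ij: "1 \<le> i" "i < j" "j < length xs"
    and asc: "pv xs j < pv xs (j + 1)" "pv xs (j + 1) < pv xs i"
    by (auto simp: occ_3_12_def)
  moreover have "even j" using down_up_ascent_iff[OF down_up, of j] ij asc by simp
  ultimately show "p \<in> {p \<in> inversions xs. even (snd p)}" by (simp add: inversions_def)
qed

lemma inversions_odd_eq:
  "{p \<in> inversions xs. odd (snd p)} = (\<lambda>(i, j). (i, j + 1)) ` occ_3_12 xs"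
proof (intro set_eqI iffI)
  fix p assume "p \<in> {p \<in> inversions xs. odd (snd p)}"
  then obtain i j where p: "p = (i, j)" and ij: "1 \<le> i" "i < j" "j \<le> length xs"
    "pv xs j < pv xs i" and "odd j"
    by (auto simp: inversions_def)
  with down_up_inversion_odd[OF down_up ij] have "(i, j - 1) \<in> occ_3_12 xs"
    by (auto simp: occ_3_12_def)
  moreover have "p = (\<lambda>(i, j). (i, j + 1)) (i, j - 1)"
    using p ij \<open>odd j\<close> by simp
  ultimately show "p \<in> (\<lambda>(i, j). (i, j + 1)) ` occ_3_12 xs" by blast
next
  fix p assume "p \<in> (\<lambda>(i, j). (i, j + 1)) ` occ_3_12 xs"
  then obtain i j where p: "p = (i, j + 1)" and ij: "1 \<le> i" "i < j" "j < length xs"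
    and asc: "pv xs j < pv xs (j + 1)" "pv xs (j + 1) < pv xs i"
    by (auto simp: occ_3_12_def)
  moreover have "even j" using down_up_ascent_iff[OF down_up, of j] ij asc by simp
  ultimately show "p \<in> {p \<in> inversions xs. odd (snd p)}" by (simp add: inversions_def)
qed

lemma card_inversions_eq_double_occ_3_12: "card (inversions xs) = 2 * card (occ_3_12 xs)"
proof -
  have "inversions xs \<inter> {p. even (snd p)} = {p \<in> inversions xs. even (snd p)}"
    and "inversions xs - {p. even (snd p)} = {p \<in> inversions xs. odd (snd p)}"
    by blast+
  then have "card (inversions xs) =
      card {p \<in> inversions xs. even (snd p)} + card {p \<in> inversions xs. odd (snd p)}"
    using card_Int_Diff[OF finite_inversions, where B = "{p. even (snd p)}"] by simp
  also have "\<dots> = card (occ_3_12 xs) + card ((\<lambda>(i, j). (i, j + 1)) ` occ_3_12 xs)"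
    by (simp only: inversions_even_eq inversions_odd_eq)
  also have "\<dots> = 2 * card (occ_3_12 xs)"
    by (subst card_image) (auto simp: inj_on_def)
  finally show ?thesis .
qed

lemma noninversion_fst_even:
  assumes "(a, b) \<in> noninversions xs"
  shows "even a"
proof (rule ccontr)
  assume "odd a"
  from assms have ab: "1 \<le> a" "a < b" "b \<le> length xs" "pv xs a < pv xs b"
    by (simp_all add: noninversions_def)
  then have descent: "pv xs (a + 1) < pv xs a"
    using down_up_descent_iff[OF down_up, of a] \<open>odd a\<close> by simp
  show False
  proof (cases "b = a + 1")
    case True
    with ab descent show False by simp
  next
    case False
    with ab have "a + 1 < b" by simp
    with avoids_213_less[OF avoids distinct, of a "a + 1" b] ab descent show False by simp
  qed
qed

lemma noninversions_eq: "noninversions xs = (\<lambda>(i, j). (i + 1, j)) ` occ_31_2 xs"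
proof (intro set_eqI iffI)
  fix p assume "p \<in> noninversions xs"
  then obtain a b where p: "p = (a, b)" and ab: "1 \<le> a" "a < b" "b \<le> length xs"
    "pv xs a < pv xs b" and "even a"
    using noninversion_fst_even by (auto simp: noninversions_def)
  then have "2 \<le> a" by presburger
  then have descent: "pv xs a < pv xs (a - 1)"
    using down_up_descent_iff[OF down_up, of "a - 1"] \<open>even a\<close> ab by simp
  then have "pv xs b < pv xs (a - 1)"
    using avoids_213_less[OF avoids distinct, of "a - 1" a b] \<open>2 \<le> a\<close> ab by simp
  with ab descent \<open>2 \<le> a\<close> have "(a - 1, b) \<in> occ_31_2 xs"
    by (simp add: occ_31_2_def)
  moreover have "p = (\<lambda>(i, j). (i + 1, j)) (a - 1, b)"
    using p \<open>2 \<le> a\<close> by simp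
  ultimately show "p \<in> (\<lambda>(i, j). (i + 1, j)) ` occ_31_2 xs" by blast
next
  fix p assume "p \<in> (\<lambda>(i, j). (i + 1, j)) ` occ_31_2 xs"
  then show "p \<in> noninversions xs"
    by (auto simp: occ_31_2_def noninversions_def)
qed

lemma card_noninversions_eq_occ_31_2: "card (noninversions xs) = card (occ_31_2 xs)"
  unfolding noninversions_eq by (rule card_image) (auto simp: inj_on_def)

lemma adi_rev_eq_card_noninversions: "adi (rev xs) = card (noninversions xs)"
proof -
  have "pv xs a < pv xs (a - 1)" if "(a, b) \<in> noninversions xs" for a b
  proof -
    have "even a" "1 \<le> a" "a < length xs"
      using noninversion_fst_even that by (auto simp: noninversions_def)
    moreover from \<open>even a\<close> \<open>1 \<le> a\<close> have "2 \<le> a" by presburger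
    ultimately show ?thesis
      using down_up_descent_iff[OF down_up, of "a - 1"] by simp
  qed
  then show ?thesis
    unfolding adi_rev noninversions_def by (intro arg_cong[where f = card]) auto
qed

end

theorem lemma3p9:
  shows "(\<forall>(n::nat) xs. is_perm (2 * n + 1) xs \<and> down_up xs \<longrightarrow> adi xs = inv_stat xs) \<and>
         (\<forall>(n::nat) xs. xs \<in> S_tilde_213 (2 * n + 1) n \<longrightarrow>
            adi xs + adi (rev xs) = 2 * n ^ 2 + n \<and>
            adi xs = 2 * pat_3_12 xs \<and>
            adi (rev xs) = pat_31_2 xs)"
proof (rule conjI; intro allI impI)
  fix n xs assume "is_perm (2 * n + 1) xs \<and> down_up xs"
  then show "adi xs = inv_stat xs"
    by (intro adi_eq_inv_stat_if_down_up) (auto simp: is_perm_def)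
next
  fix n xs assume S: "xs \<in> S_tilde_213 (2 * n + 1) n"
  then have du: "down_up xs" by (rule down_up_if_S_tilde_213)
  from S have len: "length xs = 2 * n + 1" and dist: "distinct xs" and av: "avoids_213 xs"
    by (auto simp: S_tilde_213_def is_perm_def)
  then have odd_len: "odd (length xs)" by simp
  have adi: "adi xs = card (inversions xs)"
    using adi_eq_inv_stat_if_down_up[OF du odd_len] by (simp add: inv_stat_def inversions_def)
  have adi_r: "adi (rev xs) = card (noninversions xs)"
    by (rule adi_rev_eq_card_noninversions[OF du odd_len dist av])
  have "length xs choose 2 = 2 * n ^ 2 + n"
    unfolding len choose_two by (simp add: power2_eq_square algebra_simps)
  then have "adi xs + adi (rev xs) = 2 * n ^ 2 + n"
    using card_inversions_add_noninversions[OF dist] adi adi_r by simp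
  moreover have "adi xs = 2 * pat_3_12 xs"
    using card_inversions_eq_double_occ_3_12[OF du odd_len dist av] adi
    by (simp add: pat_3_12_def occ_3_12_def)
  moreover have "adi (rev xs) = pat_31_2 xs"
    using card_noninversions_eq_occ_31_2[OF du odd_len dist av] adi_r
    by (simp add: pat_31_2_def occ_31_2_def)
  ultimately show "adi xs + adi (rev xs) = 2 * n ^ 2 + n \<and>
      adi xs = 2 * pat_3_12 xs \<and> adi (rev xs) = pat_31_2 xs"
    by blast
qed

end
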